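(* Let $G=(V,E)$ be a simple graph on vertices $V=\{1,\dots,n\}$, let $d_j$ denote the degree of vertex $j$, and let $\lambda$ be a real number. On $n$ qubits define $$\hat C=-\sum_{i=1}^n\big(\sigma^{(z)}_i+I\big)+\lambda\sum_{\{i,j\}\in E}\big(\sigma^{(z)}_i+I\big)\big(\sigma^{(z)}_j+I\big),\qquad \hat B=-\sum_{i=1}^n\sigma^{(x)}_i,$$ and $\ket{\varphi_0}=2^{-n/2}\sum_{z\in\{-1,1\}^n}\ket{z}$ (the uniform superposition over computational basis states). For real $\beta,\gamma$ let $\ket{\psi(\beta,\gamma)}=e^{-i\beta\hat B}e^{-i\gamma\hat C}\ket{\varphi_0}$. Then for every vertex $j$, $$J_j(\beta,\gamma):=\bra{\psi(\beta,\gamma)}\sigma^{(z)}_j\ket{\psi(\beta,\gamma)}=\sin(2\beta)\,\big(\cos(2\gamma\lambda)\big)^{d_j}\,\sin\!\big(2\gamma(1-d_j\lambda)\big).$$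
   Context: $\sigma^{(x)}_i,\sigma^{(z)}_i$ denote the Pauli $X$ and $Z$ matrices acting on qubit $i$ (identity elsewhere), and $I$ is the identity. Computational basis states $\ket{z}$, $z\in\{-1,1\}^n$, are labeled by the eigenvalues of the $\sigma^{(z)}_i$. $\hat C$ is the Hamiltonian encoding of the Maximum Independent Set penalized cost under $x_i\mapsto\frac12(I+\sigma^{(z)}_i)$; $\ket{\psi(\beta,\gamma)}$ is the depth-one QAOA state. *)

theory Defs
  imports "HOL-Analysis.Analysis"
begin

text \<open>Qubits are indexed by a finite linearly ordered type 'n (the vertex set).
  A computational basis state is z :: 'n \<Rightarrow> bool; its label in {-1,1}^n is
  given by spin (z i) (True = +1, False = -1), i.e. the eigenvalue of sigma_z on qubit i.
  Operators on the 2^n dimensional space are given by their matrix entries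
  A z w = <z|A|w>; states by their amplitudes.\<close>

type_synonym 'n qop = "('n \<Rightarrow> bool) \<Rightarrow> ('n \<Rightarrow> bool) \<Rightarrow> complex"
type_synonym 'n qstate = "('n \<Rightarrow> bool) \<Rightarrow> complex"

definition spin :: "bool \<Rightarrow> complex" where
  "spin b = (if b then 1 else -1)"

definition op_id :: "'n::finite qop" where
  "op_id z w = (if z = w then 1 else 0)"

definition op_add :: "'n::finite qop \<Rightarrow> 'n qop \<Rightarrow> 'n qop" where
  "op_add A B z w = A z w + B z w"

definition op_scale :: "complex \<Rightarrow> 'n::finite qop \<Rightarrow> 'n qop" where
  "op_scale c A z w = c * A z w"

definition op_sum :: "('i \<Rightarrow> 'n::finite qop) \<Rightarrow> 'i set \<Rightarrow> 'n qop" where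
  "op_sum F S z w = (\<Sum>i\<in>S. F i z w)"

definition op_mult :: "'n::finite qop \<Rightarrow> 'n qop \<Rightarrow> 'n qop" where
  "op_mult A B z w = (\<Sum>u\<in>UNIV. A z u * B u w)"

primrec op_pow :: "'n::finite qop \<Rightarrow> nat \<Rightarrow> 'n qop" where
  "op_pow A 0 = op_id"
| "op_pow A (Suc k) = op_mult A (op_pow A k)"

definition op_exp :: "'n::finite qop \<Rightarrow> 'n qop" where
  "op_exp A z w = (\<Sum>k. op_pow A k z w / of_nat (fact k))"

definition op_apply :: "'n::finite qop \<Rightarrow> 'n qstate \<Rightarrow> 'n qstate" where
  "op_apply A v z = (\<Sum>w\<in>UNIV. A z w * v w)"

definition expect :: "'n::finite qstate \<Rightarrow> 'n qop \<Rightarrow> complex" where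
  "expect \<psi> A = (\<Sum>z\<in>UNIV. \<Sum>w\<in>UNIV. cnj (\<psi> z) * A z w * \<psi> w)"

definition sigma_z :: "'n \<Rightarrow> 'n::finite qop" where
  "sigma_z i z w = (if z = w then spin (z i) else 0)"

definition sigma_x :: "'n \<Rightarrow> 'n::finite qop" where
  "sigma_x i z w = (if z = w(i := \<not> w i) then 1 else 0)"

definition simple_graph :: "'n set set \<Rightarrow> bool" where
  "simple_graph E \<longleftrightarrow> (\<forall>e\<in>E. card e = 2)"

definition degree :: "'n set set \<Rightarrow> 'n \<Rightarrow> nat" where
  "degree E j = card {e\<in>E. j \<in> e}"

definition mis_C :: "'n::{finite,linorder} set set \<Rightarrow> real \<Rightarrow> 'n qop" where
  "mis_C E lam = op_add
     (op_scale (-1) (op_sum (\<lambda>i. op_add (sigma_z i) op_id) UNIV))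
     (op_scale (complex_of_real lam)
        (op_sum (\<lambda>e. op_mult (op_add (sigma_z (Min e)) op_id) (op_add (sigma_z (Max e)) op_id)) E))"

definition mix_B :: "'n::finite qop" where
  "mix_B = op_scale (-1) (op_sum sigma_x UNIV)"

definition phi0 :: "'n::finite qstate" where
  "phi0 z = complex_of_real (2 powr (- real CARD('n) / 2))"

definition qaoa_state :: "'n::{finite,linorder} set set \<Rightarrow> real \<Rightarrow> real \<Rightarrow> real \<Rightarrow> 'n qstate" where
  "qaoa_state E lam \<beta> \<gamma> =
     op_apply (op_exp (op_scale (- \<i> * complex_of_real \<beta>) mix_B))
       (op_apply (op_exp (op_scale (- \<i> * complex_of_real \<gamma>) (mis_C E lam))) phi0)"

end

theory Submission
  imports Defs
begin

text \<open>The cost operator is diagonal, so \<open>exp (-i \<gamma> C)\<close> only multiplies each uniform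
  amplitude by the phase \<open>exp (-i \<gamma> c(z))\<close>, while \<open>exp (-i \<beta> B)\<close> is the tensor power of
  the one-qubit rotation \<open>cos \<beta> I + i sin \<beta> X\<close> (diagonalise \<open>\<Sum>\<^sub>i X\<^sub>i\<close> with the
  Hadamard transform). Conjugating \<open>Z\<^sub>j\<close> by this product gives an operator acting on qubit
  \<open>j\<close> alone, with diagonal entries \<open>s cos 2\<beta>\<close> and off-diagonal entries \<open>i s sin 2\<beta>\<close>.
  The diagonal part averages to zero; the off-diagonal part pairs each \<open>z\<close> with its
  \<open>j\<close>-flip, whose cost differs by \<open>2 s\<^sub>j (-1 + \<lambda> \<Sum>\<^sub>k\<^sub>\<sim>\<^sub>j (s\<^sub>k + 1))\<close>.
  Averaging over the independent bits, each neighbour contributes the factor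
  \<open>(1 + exp (4 i \<gamma> \<lambda> s\<^sub>j)) / 2 = exp (2 i \<gamma> \<lambda> s\<^sub>j) cos 2\<gamma>\<lambda>\<close>, and the two values
  \<open>s\<^sub>j = \<plusminus>1\<close> combine into \<open>sin 2\<gamma>(1 - d\<^sub>j \<lambda>)\<close>.\<close>

section \<open>Sums over bit strings\<close>

lemma sum_fun_prod_eq_prod_sum:
  fixes f :: "'a::finite \<Rightarrow> 'b::finite \<Rightarrow> 'c::comm_semiring_1"
  shows "(\<Sum>w\<in>UNIV. \<Prod>i\<in>UNIV. f i (w i)) = (\<Prod>i\<in>UNIV. \<Sum>b\<in>UNIV. f i b)"
  by (subst prod_sum_PiE) (simp_all add: PiE_UNIV_domain)

lemma sum_fixed_bit_prod:
  fixes h :: "bool \<Rightarrow> 'c::field_char_0" and j :: "'n::finite"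
  assumes "j \<notin> N"
  shows "(\<Sum>w\<in>UNIV. if w j = b then \<Prod>k\<in>N. h (w k) else 0)
       = 2 ^ CARD('n) / 2 * ((h True + h False) / 2) ^ card N"
proof -
  define g where "g i x = (if i = j then (if x = b then 1 else 0) else if i \<in> N then h x else 1)"
    for i x
  have N: "(UNIV - {j}) \<inter> N = N" using assms by blast
  have "(\<Sum>w\<in>UNIV. if w j = b then \<Prod>k\<in>N. h (w k) else 0) = (\<Sum>w\<in>UNIV. \<Prod>i\<in>UNIV. g i (w i))"
  proof (rule sum.cong)
    fix w :: "'n \<Rightarrow> bool"
    have "(\<Prod>i\<in>UNIV. g i (w i)) = g j (w j) * (\<Prod>i\<in>N. h (w i))"
      by (simp add: g_def prod.If_cases Compl_eq_Diff_UNIV N)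
    then show "(if w j = b then \<Prod>k\<in>N. h (w k) else 0) = (\<Prod>i\<in>UNIV. g i (w i))"
      by (simp add: g_def)
  qed simp
  also have "\<dots> = (\<Prod>i\<in>UNIV. g i True + g i False)"
    by (simp add: sum_fun_prod_eq_prod_sum UNIV_bool add.commute)
  also have "\<dots> = 2 ^ CARD('n) * (\<Prod>i\<in>UNIV. (g i True + g i False) / 2)"
    by (simp add: prod_dividef)
  also have "(\<Prod>i\<in>UNIV. (g i True + g i False) / 2) = 1 / 2 * ((h True + h False) / 2) ^ card N"
  proof -
    have "(g i True + g i False) / 2
        = (if i = j then 1 / 2 else if i \<in> N then (h True + h False) / 2 else 1)" for i
      by (cases b) (simp_all add: g_def)
    then show ?thesis by (simp add: prod.If_cases Compl_eq_Diff_UNIV N)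
  qed
  finally show ?thesis by simp
qed

lemma average_neighbour_phase:
  fixes A B :: "bool \<Rightarrow> complex" and c l :: complex and j :: "'n::finite"
  assumes "j \<notin> N"
  shows "(\<Sum>w\<in>UNIV. A (w j) + B (w j) * exp (c * spin (w j) * (-1 + l * (\<Sum>k\<in>N. spin (w k) + 1))))
      / 2 ^ CARD('n)
    = (\<Sum>b\<in>UNIV. A b + B b * exp (- c * spin b) * ((exp (2 * c * l * spin b) + 1) / 2) ^ card N) / 2"
proof -
  define h where "h b x = exp (c * spin b * l * (spin x + 1))" for b x
  have phase: "exp (c * spin b * (-1 + l * (\<Sum>k\<in>N. spin (w k) + 1)))
      = exp (- c * spin b) * (\<Prod>k\<in>N. h b (w k))" for b and w :: "'n \<Rightarrow> bool"
  proof -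
    have "c * spin b * (-1 + l * (\<Sum>k\<in>N. spin (w k) + 1))
        = - c * spin b + (\<Sum>k\<in>N. c * spin b * l * (spin (w k) + 1))"
      by (simp add: sum_distrib_left algebra_simps)
    then show ?thesis
      by (simp only: h_def exp_add exp_sum[OF finite])
  qed
  have fixed_bit: "(\<Sum>w\<in>UNIV. if w j = b then A b + B b * exp (- c * spin b) * (\<Prod>k\<in>N. h b (w k)) else 0)
      = 2 ^ CARD('n) / 2 * (A b + B b * exp (- c * spin b) * ((exp (2 * c * l * spin b) + 1) / 2) ^ card N)"
    for b
  proof -
    have count: "(\<Sum>w\<in>UNIV. if w j = b then 1 else 0) = 2 ^ CARD('n) / (2::complex)"
      using sum_fixed_bit_prod[of j "{}" b "\<lambda>_. 1 :: complex"] by (simp only: prod.empty) simp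
    have "h b True + h b False = exp (2 * c * l * spin b) + 1"
      by (simp add: h_def spin_def mult_ac)
    moreover have "(\<Sum>w\<in>UNIV. if w j = b then A b + B b * exp (- c * spin b) * (\<Prod>k\<in>N. h b (w k)) else 0)
        = A b * (\<Sum>w\<in>UNIV. if w j = b then 1 else 0)
          + B b * exp (- c * spin b) * (\<Sum>w\<in>UNIV. if w j = b then \<Prod>k\<in>N. h b (w k) else 0)"
      unfolding sum_distrib_left sum.distrib[symmetric] by (intro sum.cong) simp_all
    ultimately show ?thesis
      unfolding count sum_fixed_bit_prod[OF assms] by (simp add: algebra_simps)
  qed
  have "(\<Sum>w\<in>UNIV. A (w j) + B (w j) * exp (c * spin (w j) * (-1 + l * (\<Sum>k\<in>N. spin (w k) + 1))))
      = (\<Sum>w\<in>UNIV. \<Sum>b\<in>UNIV.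
          if w j = b then A b + B b * exp (- c * spin b) * (\<Prod>k\<in>N. h b (w k)) else 0)"
    unfolding phase by (intro sum.cong refl) (simp add: UNIV_bool)
  also have "\<dots> = (\<Sum>b\<in>UNIV. 2 ^ CARD('n) / 2
      * (A b + B b * exp (- c * spin b) * ((exp (2 * c * l * spin b) + 1) / 2) ^ card N))"
    by (subst sum.swap) (simp add: fixed_bit)
  finally show ?thesis
    by (simp add: sum_divide_distrib flip: sum_distrib_left)
qed

section \<open>Operators on the register\<close>

lemma sums_exp_of_nat_fact:
  fixes x :: "'a::{real_normed_field,banach}"
  shows "(\<lambda>k. x ^ k / fact k) sums exp x"
  using exp_converges[of x] by (simp add: scaleR_conv_of_real divide_inverse mult.commute)

lemma op_mult_assoc: "op_mult (op_mult A B) C = op_mult A (op_mult B C)"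
  unfolding op_mult_def sum_distrib_right sum_distrib_left
  by (intro ext, subst sum.swap) (simp add: mult.assoc)

lemma op_mult_id_left [simp]: "op_mult op_id A = A"
  by (intro ext) (simp add: op_mult_def op_id_def if_distrib[where f="\<lambda>x. x * _"] cong: if_cong)

lemma op_mult_scale_right: "op_mult A (op_scale c B) = op_scale c (op_mult A B)"
  by (simp add: op_mult_def op_scale_def sum_distrib_left mult_ac fun_eq_iff)

lemma op_mult_sum_left: "op_mult (op_sum F S) B = op_sum (\<lambda>i. op_mult (F i) B) S"
  by (simp add: op_mult_def op_sum_def sum_distrib_right fun_eq_iff sum.swap[of _ S])

lemma op_pow_scale: "op_pow (op_scale c A) k = op_scale (c ^ k) (op_pow A k)"
  by (induction k) (simp_all add: op_id_def op_scale_def op_mult_def sum_distrib_left mult_ac fun_eq_iff)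

lemma op_apply_mult: "op_apply (op_mult A B) v = op_apply A (op_apply B v)"
  unfolding op_apply_def op_mult_def sum_distrib_right sum_distrib_left
  by (intro ext, subst sum.swap) (simp add: mult.assoc)

definition op_diag :: "(('n \<Rightarrow> bool) \<Rightarrow> complex) \<Rightarrow> 'n::finite qop" where
  "op_diag a z w = (if z = w then a w else 0)"

lemma op_id_eq_diag: "op_id = op_diag (\<lambda>_. 1)"
  by (intro ext) (simp add: op_id_def op_diag_def)

lemma sigma_z_eq_diag: "sigma_z i = op_diag (\<lambda>w. spin (w i))"
  by (intro ext) (simp add: sigma_z_def op_diag_def)

lemma op_add_diag: "op_add (op_diag a) (op_diag b) = op_diag (\<lambda>w. a w + b w)"
  by (intro ext) (simp add: op_add_def op_diag_def)

lemma op_scale_diag: "op_scale c (op_diag a) = op_diag (\<lambda>w. c * a w)"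
  by (intro ext) (simp add: op_scale_def op_diag_def)

lemma op_sum_diag: "op_sum (\<lambda>i. op_diag (a i)) S = op_diag (\<lambda>w. \<Sum>i\<in>S. a i w)"
  by (intro ext) (simp add: op_sum_def op_diag_def)

lemma op_mult_diag_right: "op_mult A (op_diag a) z w = A z w * a w"
  by (simp add: op_mult_def op_diag_def if_distrib[where f="\<lambda>x. _ * x"] cong: if_cong)

lemma op_mult_diag_left: "op_mult (op_diag a) B z w = a z * B z w"
  by (simp add: op_mult_def op_diag_def if_distrib[where f="\<lambda>x. x * _"] cong: if_cong)

lemma op_mult_id_right [simp]: "op_mult A op_id = A"
  by (intro ext) (simp add: op_id_eq_diag op_mult_diag_right)

lemma op_mult_diag: "op_mult (op_diag a) (op_diag b) = op_diag (\<lambda>w. a w * b w)"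
  by (intro ext) (simp add: op_mult_diag_right op_diag_def)

lemma op_pow_diag: "op_pow (op_diag a) k = op_diag (\<lambda>w. a w ^ k)"
  by (induction k) (simp_all add: op_id_eq_diag op_mult_diag)

lemma op_exp_diag: "op_exp (op_diag a) = op_diag (\<lambda>w. exp (a w))"
  by (intro ext) (simp add: op_exp_def op_pow_diag op_diag_def
      sums_unique[OF sums_exp_of_nat_fact, symmetric])

lemma op_apply_diag: "op_apply (op_diag a) v = (\<lambda>w. a w * v w)"
  by (intro ext) (simp add: op_apply_def op_diag_def if_distrib[where f="\<lambda>x. x * _"] cong: if_cong)

lemma op_exp_scale_diagonalized:
  assumes AH: "op_mult A H = op_mult H (op_diag d)"
    and HH: "op_mult H H = op_scale c op_id" and "c \<noteq> 0"
  shows "op_exp (op_scale s A) z w = (\<Sum>u\<in>UNIV. H z u * exp (s * d u) * H u w) / c"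
proof -
  have pow_H: "op_mult (op_pow A k) H = op_mult H (op_diag (\<lambda>u. d u ^ k))" for k
  proof (induction k)
    case (Suc k)
    have "op_mult (op_pow A (Suc k)) H = op_mult (op_mult A H) (op_diag (\<lambda>u. d u ^ k))"
      by (simp add: op_mult_assoc Suc)
    then show ?case by (simp add: AH op_mult_assoc op_mult_diag mult.commute)
  qed (simp add: op_id_eq_diag[symmetric])
  have pow: "op_pow A k z w = (\<Sum>u\<in>UNIV. H z u * d u ^ k * H u w) / c" for k
  proof -
    have "op_scale c (op_pow A k) = op_mult (op_pow A k) (op_mult H H)"
      by (simp add: HH op_mult_scale_right)
    also have "\<dots> = op_mult (op_mult H (op_diag (\<lambda>u. d u ^ k))) H"
      by (simp add: pow_H flip: op_mult_assoc)
    finally have "c * op_pow A k z w = (\<Sum>u\<in>UNIV. H z u * d u ^ k * H u w)"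
      by (simp add: fun_eq_iff op_scale_def op_mult_def[of "op_mult _ _"] op_mult_diag_right)
    then show ?thesis
      using \<open>c \<noteq> 0\<close> by (simp add: nonzero_eq_divide_eq mult.commute)
  qed
  have "(\<lambda>k. (\<Sum>u\<in>UNIV. H z u * H u w * ((s * d u) ^ k / fact k)) / c)
      sums ((\<Sum>u\<in>UNIV. H z u * H u w * exp (s * d u)) / c)"
    by (intro sums_divide sums_sum sums_mult sums_exp_of_nat_fact)
  then show ?thesis
    unfolding op_exp_def op_pow_scale
    by (simp add: op_scale_def pow sums_unique[symmetric] power_mult_distrib
        sum_divide_distrib sum_distrib_left mult_ac)
qed

section \<open>The mixing operator\<close>

definition hadamard :: "'n::finite qop" where
  "hadamard z u = (\<Prod>i\<in>UNIV. if z i \<and> u i then -1 else 1)"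

definition tensor_op :: "(bool \<Rightarrow> bool \<Rightarrow> complex) \<Rightarrow> 'n::finite qop" where
  "tensor_op u z w = (\<Prod>i\<in>UNIV. u (z i) (w i))"

text \<open>The matrix of \<open>exp (i \<beta> X) = cos \<beta> I + i sin \<beta> X\<close> on a single qubit.\<close>

definition x_rotation :: "real \<Rightarrow> bool \<Rightarrow> bool \<Rightarrow> complex" where
  "x_rotation \<beta> x y = (if x = y then complex_of_real (cos \<beta>) else \<i> * complex_of_real (sin \<beta>))"

lemma op_mult_sigma_x: "op_mult (sigma_x i) B z w = B (z(i := \<not> z i)) w"
proof -
  have "z = u(i := \<not> u i) \<longleftrightarrow> u = z(i := \<not> z i)" for u
    by (auto simp: fun_eq_iff)
  then show ?thesis
    by (simp add: op_mult_def sigma_x_def if_distrib[where f="\<lambda>x. x * _"] cong: if_cong)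
qed

lemma hadamard_flip: "hadamard (z(i := \<not> z i)) u = - spin (u i) * hadamard z u"
proof -
  have "hadamard (z(i := \<not> z i)) u
      = (if \<not> z i \<and> u i then -1 else 1) * (\<Prod>k\<in>UNIV - {i}. if z k \<and> u k then -1 else 1)"
    unfolding hadamard_def by (subst prod.remove[of _ i]) (auto intro!: prod.cong)
  also have "\<dots> = - spin (u i) * hadamard z u"
    unfolding hadamard_def by (subst (2) prod.remove[of _ i]) (auto simp: spin_def)
  finally show ?thesis .
qed

lemma sum_sigma_x_mult_hadamard:
  "op_mult (op_sum sigma_x UNIV) hadamard = op_mult hadamard (op_diag (\<lambda>u. \<Sum>i\<in>UNIV. - spin (u i)))"
  by (intro ext) (simp add: op_mult_sum_left op_sum_def op_mult_sigma_x hadamard_flip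
      op_mult_diag_right sum_distrib_left sum_distrib_right mult.commute)

lemma hadamard_mult_hadamard: "op_mult hadamard hadamard = op_scale (2 ^ CARD('n)) (op_id :: 'n::finite qop)"
proof (intro ext)
  fix z w :: "'n \<Rightarrow> bool"
  have "op_mult hadamard hadamard z w
      = (\<Sum>u\<in>UNIV. \<Prod>i\<in>UNIV. (if z i \<and> u i then -1 else 1) * (if u i \<and> w i then -1 else 1))"
    by (simp add: op_mult_def hadamard_def prod.distrib)
  also have "\<dots>
      = (\<Prod>i\<in>UNIV. \<Sum>b\<in>UNIV. (if z i \<and> b then -1 else 1) * (if b \<and> w i then -1 else 1))"
    by (rule sum_fun_prod_eq_prod_sum)
  also have "\<dots> = (\<Prod>i\<in>UNIV. if z i = w i then 2 else 0)"
    by (intro prod.cong) (auto simp: UNIV_bool)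
  also have "\<dots> = op_scale (2 ^ CARD('n)) op_id z w"
  proof (cases "z = w")
    case False
    then obtain i where "z i \<noteq> w i" by auto
    with False show ?thesis by (auto simp: op_scale_def op_id_def intro!: prod_zero)
  qed (simp add: op_scale_def op_id_def)
  finally show "op_mult hadamard hadamard z w = op_scale (2 ^ CARD('n)) op_id z w" .
qed

lemma op_exp_mix_B: "op_exp (op_scale (- \<i> * \<beta>) mix_B) = tensor_op (x_rotation \<beta>)"
proof (intro ext)
  fix z w :: "'n::finite \<Rightarrow> bool"
  define f where
    "f i b = (if z i \<and> b then -1 else 1) * exp (- \<i> * \<beta> * spin b) * (if b \<and> w i then -1 else 1)"
    for i b
  have "op_scale (- \<i> * \<beta>) (mix_B :: 'n qop) = op_scale (\<i> * \<beta>) (op_sum sigma_x UNIV)"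
    by (intro ext) (simp add: mix_B_def op_scale_def)
  then have "op_exp (op_scale (- \<i> * \<beta>) mix_B) z w
      = (\<Sum>u\<in>UNIV. hadamard z u * exp (\<i> * \<beta> * (\<Sum>i\<in>UNIV. - spin (u i))) * hadamard u w)
        / 2 ^ CARD('n)"
    by (simp only:) (rule op_exp_scale_diagonalized[OF sum_sigma_x_mult_hadamard hadamard_mult_hadamard], simp)
  also have "\<dots> = (\<Sum>u\<in>UNIV. \<Prod>i\<in>UNIV. f i (u i)) / 2 ^ CARD('n)"
    by (simp add: f_def hadamard_def sum_distrib_left exp_sum prod.distrib)
  also have "\<dots> = (\<Prod>i\<in>UNIV. (f i True + f i False) / 2)"
    by (simp add: sum_fun_prod_eq_prod_sum UNIV_bool prod_dividef add.commute)
  also have "\<dots> = tensor_op (x_rotation \<beta>) z w"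
  proof -
    have "cos (complex_of_real \<beta>) = (exp (\<i> * \<beta>) + exp (- (\<i> * \<beta>))) / 2"
      by (rule cos_exp_eq)
    moreover have "\<i> * sin (complex_of_real \<beta>) = (exp (\<i> * \<beta>) - exp (- (\<i> * \<beta>))) / 2"
      by (simp add: sin_exp_eq field_simps)
    ultimately have "(f i True + f i False) / 2 = x_rotation \<beta> (z i) (w i)" for i
      by (cases "z i"; cases "w i") (simp_all add: f_def x_rotation_def spin_def cos_of_real sin_of_real)
    then show ?thesis by (simp add: tensor_op_def)
  qed
  finally show "op_exp (op_scale (- \<i> * \<beta>) mix_B) z w = tensor_op (x_rotation \<beta>) z w" .
qed

lemma x_rotation_unitary:
  "(\<Sum>b\<in>UNIV. cnj (x_rotation \<beta> b x) * x_rotation \<beta> b y) = (if x = y then 1 else 0)"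
proof -
  have "complex_of_real (cos \<beta>) * complex_of_real (cos \<beta>)
      + complex_of_real (sin \<beta>) * complex_of_real (sin \<beta>) = 1"
    by (simp flip: of_real_mult of_real_add)
  then show ?thesis by (cases x; cases y) (simp_all add: x_rotation_def UNIV_bool algebra_simps)
qed

lemma x_rotation_conj_spin:
  "(\<Sum>b\<in>UNIV. spin b * cnj (x_rotation \<beta> b x) * x_rotation \<beta> b y)
    = (if x = y then spin x * complex_of_real (cos (2 * \<beta>))
       else \<i> * spin x * complex_of_real (sin (2 * \<beta>)))"
proof -
  have "complex_of_real (cos (2 * \<beta>))
      = complex_of_real (cos \<beta>) * complex_of_real (cos \<beta>)
        - complex_of_real (sin \<beta>) * complex_of_real (sin \<beta>)"
    and "complex_of_real (sin (2 * \<beta>)) = 2 * complex_of_real (sin \<beta>) * complex_of_real (cos \<beta>)"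
    by (simp_all add: cos_double sin_double power2_eq_square)
  then show ?thesis by (cases x; cases y) (simp_all add: x_rotation_def UNIV_bool spin_def algebra_simps)
qed

section \<open>Expectation values of one-qubit operators\<close>

definition op_adj :: "'n::finite qop \<Rightarrow> 'n qop" where
  "op_adj A z w = cnj (A w z)"

definition local_op :: "'n \<Rightarrow> (bool \<Rightarrow> bool \<Rightarrow> complex) \<Rightarrow> 'n::finite qop" where
  "local_op j k z w = (if \<forall>i. i \<noteq> j \<longrightarrow> z i = w i then k (z j) (w j) else 0)"

lemma expect_eq_sum_apply: "expect v A = (\<Sum>z\<in>UNIV. cnj (v z) * op_apply A v z)"
  by (simp add: expect_def op_apply_def sum_distrib_left mult.assoc)

lemma sum_cnj_apply_eq_sum_apply_adj:
  "(\<Sum>z\<in>UNIV. cnj (op_apply U v z) * x z) = (\<Sum>u\<in>UNIV. cnj (v u) * op_apply (op_adj U) x u)"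
  unfolding op_apply_def op_adj_def cnj_sum sum_distrib_left sum_distrib_right
  by (subst sum.swap) (simp add: mult_ac)

lemma expect_op_apply: "expect (op_apply U v) A = expect v (op_mult (op_adj U) (op_mult A U))"
  by (simp add: expect_eq_sum_apply sum_cnj_apply_eq_sum_apply_adj op_apply_mult)

lemma prod_if_eq_else_indicator:
  fixes a :: "'c::comm_semiring_1" and j :: "'n::finite"
  shows "(\<Prod>i\<in>UNIV. if i = j then a else if P i then 1 else 0)
    = (if \<forall>i. i \<noteq> j \<longrightarrow> P i then a else 0)"
proof -
  have "(\<Prod>i\<in>UNIV. if i = j then a else if P i then 1 else 0)
      = a * (\<Prod>i\<in>UNIV - {j}. if P i then 1 else 0)"
    by (subst prod.remove[of _ j]) (auto intro!: prod.cong)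
  also have "(\<Prod>i\<in>UNIV - {j}. if P i then 1 else 0)
      = (if \<forall>i. i \<noteq> j \<longrightarrow> P i then 1 else (0::'c))"
    by (auto intro!: prod_zero)
  finally show ?thesis by auto
qed

lemma adj_tensor_op_sigma_z_tensor_op:
  fixes u :: "bool \<Rightarrow> bool \<Rightarrow> complex" and j :: "'n::finite"
  assumes unitary: "\<And>x y. (\<Sum>b\<in>UNIV. cnj (u b x) * u b y) = (if x = y then 1 else 0)"
  shows "op_mult (op_adj (tensor_op u)) (op_mult (sigma_z j) (tensor_op u))
    = local_op j (\<lambda>x y. \<Sum>b\<in>UNIV. spin b * cnj (u b x) * u b y)"
proof (intro ext)
  fix w w' :: "'n \<Rightarrow> bool"
  define f where "f i b = (if i = j then spin b else 1) * cnj (u b (w i)) * u b (w' i)" for i b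
  have "op_mult (op_adj (tensor_op u)) (op_mult (sigma_z j) (tensor_op u)) w w'
      = (\<Sum>z\<in>UNIV. \<Prod>i\<in>UNIV. f i (z i))"
    unfolding op_mult_def[of "op_adj _"]
  proof (rule sum.cong)
    fix z :: "'n \<Rightarrow> bool"
    have "spin (z j) = (\<Prod>i\<in>UNIV. if i = j then spin (z i) else 1)" by simp
    then show "op_adj (tensor_op u) w z * op_mult (sigma_z j) (tensor_op u) z w'
        = (\<Prod>i\<in>UNIV. f i (z i))"
      by (simp add: f_def op_adj_def tensor_op_def sigma_z_eq_diag op_mult_diag_left cnj_prod
          prod.distrib mult_ac)
  qed simp
  also have "\<dots> = (\<Prod>i\<in>UNIV. \<Sum>b\<in>UNIV. f i b)"
    by (rule sum_fun_prod_eq_prod_sum)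
  also have "\<dots> = (\<Prod>i\<in>UNIV. if i = j then (\<Sum>b\<in>UNIV. spin b * cnj (u b (w j)) * u b (w' j))
      else if w i = w' i then 1 else 0)"
    by (intro prod.cong) (simp_all add: f_def unitary)
  also have "\<dots> = local_op j (\<lambda>x y. \<Sum>b\<in>UNIV. spin b * cnj (u b x) * u b y) w w'"
    by (simp add: prod_if_eq_else_indicator local_op_def)
  finally show "op_mult (op_adj (tensor_op u)) (op_mult (sigma_z j) (tensor_op u)) w w'
      = local_op j (\<lambda>x y. \<Sum>b\<in>UNIV. spin b * cnj (u b x) * u b y) w w'" .
qed

lemma agree_outside_iff:
  "(\<forall>i. i \<noteq> j \<longrightarrow> w i = w' i) \<longleftrightarrow> w' = w \<or> w' = w(j := \<not> w j)"
  by (auto simp: fun_eq_iff)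

lemma expect_local_op:
  fixes j :: "'n::finite"
  shows "expect v (local_op j k)
    = (\<Sum>w\<in>UNIV. cnj (v w) * (k (w j) (w j) * v w + k (w j) (\<not> w j) * v (w(j := \<not> w j))))"
proof -
  have "w(j := \<not> w j) \<noteq> w" "w \<noteq> w(j := \<not> w j)" for w :: "'n \<Rightarrow> bool"
    by (metis fun_upd_same)+
  then have "local_op j k w w' = (if w' = w then k (w j) (w j) else 0)
      + (if w' = w(j := \<not> w j) then k (w j) (\<not> w j) else 0)" for w w'
    by (auto simp: local_op_def agree_outside_iff)
  then show ?thesis
    by (simp add: expect_def distrib_left distrib_right sum.distrib
        if_distrib[where f="\<lambda>x. _ * x"] if_distrib[where f="\<lambda>x. x * _"] mult_ac cong: if_cong)
qed

section \<open>The MIS cost function\<close>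

definition mis_cost :: "'n::finite set set \<Rightarrow> real \<Rightarrow> ('n \<Rightarrow> bool) \<Rightarrow> complex" where
  "mis_cost E lam w = - (\<Sum>i\<in>UNIV. spin (w i) + 1) + lam * (\<Sum>e\<in>E. \<Prod>i\<in>e. spin (w i) + 1)"

definition neighbours :: "'n set set \<Rightarrow> 'n \<Rightarrow> 'n set" where
  "neighbours E j = {k. k \<noteq> j \<and> {j, k} \<in> E}"

lemma cnj_spin [simp]: "cnj (spin b) = spin b"
  by (simp add: spin_def)

lemma cnj_mis_cost: "cnj (mis_cost E lam w) = mis_cost E lam w"
  by (simp add: mis_cost_def cnj_sum cnj_prod)

lemma mult_Min_Max_eq_prod:
  fixes e :: "'a::linorder set" and f :: "'a \<Rightarrow> 'b::comm_monoid_mult"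
  assumes "card e = 2"
  shows "f (Min e) * f (Max e) = (\<Prod>i\<in>e. f i)"
proof -
  obtain x y where "e = {x, y}" "x \<noteq> y" using assms by (auto simp: card_2_iff)
  then show ?thesis by (cases "x < y") (auto simp: min_def max_def mult.commute)
qed

lemma mis_C_eq_diag:
  fixes E :: "'n::{finite,linorder} set set"
  assumes "simple_graph E"
  shows "mis_C E lam = op_diag (mis_cost E lam)"
proof -
  have "mis_C E lam = op_diag (\<lambda>w. - (\<Sum>i\<in>UNIV. spin (w i) + 1)
      + lam * (\<Sum>e\<in>E. (spin (w (Min e)) + 1) * (spin (w (Max e)) + 1)))"
    by (simp add: mis_C_def sigma_z_eq_diag op_id_eq_diag op_add_diag op_mult_diag op_sum_diag
        op_scale_diag)
  also have "\<dots> = op_diag (mis_cost E lam)"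
  proof -
    have "(\<Sum>e\<in>E. (spin (w (Min e)) + 1) * (spin (w (Max e)) + 1))
        = (\<Sum>e\<in>E. \<Prod>i\<in>e. spin (w i) + 1)" for w :: "'n \<Rightarrow> bool"
      using assms by (intro sum.cong)
        (simp_all add: simple_graph_def mult_Min_Max_eq_prod[where f="\<lambda>i. spin (w i) + 1"])
    then show ?thesis by (intro arg_cong[where f=op_diag] ext) (simp add: mis_cost_def)
  qed
  finally show ?thesis .
qed

lemma sum_incident_edges:
  assumes "simple_graph E"
  shows "(\<Sum>e\<in>{e\<in>E. j \<in> e}. f e) = (\<Sum>k\<in>neighbours E j. f {j, k})"
proof (rule sum.reindex_bij_betw[symmetric])
  show "bij_betw (\<lambda>k. {j, k}) (neighbours E j) {e\<in>E. j \<in> e}"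
  proof (rule bij_betw_imageI)
    show "inj_on (\<lambda>k. {j, k}) (neighbours E j)"
      by (auto simp: inj_on_def neighbours_def doubleton_eq_iff)
    show "(\<lambda>k. {j, k}) ` neighbours E j = {e\<in>E. j \<in> e}"
    proof (intro equalityI subsetI)
      fix e assume e: "e \<in> {e\<in>E. j \<in> e}"
      then have "card e = 2"
        using assms by (simp add: simple_graph_def)
      then obtain x y where "e = {x, y}" "x \<noteq> y"
        unfolding card_2_iff by blast
      then obtain k where k: "k \<noteq> j" "e = {j, k}"
        using e by (metis insert_commute insertE mem_Collect_eq singletonD)
      then have "k \<in> neighbours E j"
        using e by (simp add: neighbours_def)
      with k show "e \<in> (\<lambda>k. {j, k}) ` neighbours E j"
        by blast
    qed (auto simp: neighbours_def)
  qed
qed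

lemma card_neighbours:
  assumes "simple_graph E"
  shows "card (neighbours E j) = degree E j"
  using sum_incident_edges[OF assms, where j=j and f="\<lambda>_. 1::nat"] by (simp add: degree_def)

lemma mis_cost_flip:
  assumes "simple_graph E"
  shows "mis_cost E lam w - mis_cost E lam (w(j := \<not> w j))
    = 2 * spin (w j) * (-1 + lam * (\<Sum>k\<in>neighbours E j. spin (w k) + 1))"
proof -
  let ?w' = "w(j := \<not> w j)"
  have spin_flip: "spin (w j) - spin (\<not> w j) = 2 * spin (w j)"
    by (simp add: spin_def)
  have vertices: "(\<Sum>i\<in>UNIV. spin (w i) + 1) - (\<Sum>i\<in>UNIV. spin (?w' i) + 1) = 2 * spin (w j)"
  proof -
    have "(\<Sum>i\<in>UNIV. spin (w i) + 1) - (\<Sum>i\<in>UNIV. spin (?w' i) + 1)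
        = (\<Sum>i\<in>UNIV. if i = j then 2 * spin (w j) else 0)"
      unfolding sum_subtractf[symmetric] by (intro sum.cong) (auto simp: spin_flip)
    then show ?thesis by simp
  qed
  have "(\<Sum>e\<in>E. \<Prod>i\<in>e. spin (w i) + 1) - (\<Sum>e\<in>E. \<Prod>i\<in>e. spin (?w' i) + 1)
      = (\<Sum>e\<in>E. if j \<in> e then (\<Prod>i\<in>e. spin (w i) + 1) - (\<Prod>i\<in>e. spin (?w' i) + 1) else 0)"
    unfolding sum_subtractf[symmetric] by (intro sum.cong) (auto intro: prod.cong)
  also have "\<dots>
      = (\<Sum>e\<in>{e\<in>E. j \<in> e}. (\<Prod>i\<in>e. spin (w i) + 1) - (\<Prod>i\<in>e. spin (?w' i) + 1))"
    by (rule sum.inter_filter[symmetric]) simp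
  also have "\<dots> = (\<Sum>k\<in>neighbours E j.
      (\<Prod>i\<in>{j, k}. spin (w i) + 1) - (\<Prod>i\<in>{j, k}. spin (?w' i) + 1))"
    by (rule sum_incident_edges[OF assms])
  also have "\<dots> = (\<Sum>k\<in>neighbours E j. 2 * spin (w j) * (spin (w k) + 1))"
    by (intro sum.cong) (auto simp: neighbours_def spin_def)
  finally show ?thesis
    using vertices unfolding mis_cost_def sum_distrib_left[symmetric] by (simp add: algebra_simps)
qed

section \<open>The depth-one QAOA expectation\<close>

lemma cnj_phi0_mult_phi0:
  fixes w w' :: "'n::finite \<Rightarrow> bool"
  shows "cnj (phi0 w) * phi0 w' = 1 / 2 ^ CARD('n)"
proof -
  have "2 powr (- real CARD('n) / 2) * 2 powr (- real CARD('n) / 2) = 2 powr (- real CARD('n))"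
    by (simp add: powr_add[symmetric])
  also have "\<dots> = 1 / 2 ^ CARD('n)"
    by (simp add: powr_minus powr_realpow divide_inverse)
  finally have "2 powr (- real CARD('n) / 2) * 2 powr (- real CARD('n) / 2) = 1 / 2 ^ CARD('n)" .
  then show ?thesis
    by (simp add: phi0_def flip: of_real_mult)
qed

lemma qaoa_state_eq_tensor_op:
  assumes "simple_graph E"
  shows "qaoa_state E lam \<beta> \<gamma>
    = op_apply (tensor_op (x_rotation \<beta>)) (\<lambda>w. exp (- \<i> * \<gamma> * mis_cost E lam w) * phi0 w)"
  unfolding qaoa_state_def op_exp_mix_B mis_C_eq_diag[OF assms] op_scale_diag op_exp_diag
    op_apply_diag ..

lemma expect_qaoa_state_sigma_z:
  fixes E :: "'n::{finite,linorder} set set"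
  assumes "simple_graph E"
  shows "expect (qaoa_state E lam \<beta> \<gamma>) (sigma_z j)
    = (\<Sum>w\<in>UNIV. spin (w j) * complex_of_real (cos (2 * \<beta>))
        + \<i> * spin (w j) * complex_of_real (sin (2 * \<beta>))
        * exp (2 * \<i> * \<gamma> * spin (w j) * (-1 + lam * (\<Sum>k\<in>neighbours E j. spin (w k) + 1))))
      / 2 ^ CARD('n)"
proof -
  define a where "a w = exp (- \<i> * \<gamma> * mis_cost E lam w) * phi0 w" for w
  have amplitudes: "cnj (a w) * a w' = exp (\<i> * \<gamma> * (mis_cost E lam w - mis_cost E lam w')) / 2 ^ CARD('n)"
    for w w'
  proof -
    have "cnj (a w) * a w' = exp (\<i> * \<gamma> * mis_cost E lam w) * exp (- \<i> * \<gamma> * mis_cost E lam w')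
        * (cnj (phi0 w) * phi0 w')"
      by (simp add: a_def exp_cnj cnj_mis_cost mult_ac)
    then show ?thesis
      unfolding cnj_phi0_mult_phi0 by (simp add: right_diff_distrib exp_diff exp_minus divide_inverse mult_ac)
  qed
  have "expect (qaoa_state E lam \<beta> \<gamma>) (sigma_z j)
      = expect a (local_op j (\<lambda>x y. if x = y then spin x * complex_of_real (cos (2 * \<beta>))
        else \<i> * spin x * complex_of_real (sin (2 * \<beta>))))"
    by (simp add: qaoa_state_eq_tensor_op[OF assms] a_def[abs_def] expect_op_apply
        adj_tensor_op_sigma_z_tensor_op x_rotation_unitary x_rotation_conj_spin)
  also have "\<dots> = (\<Sum>w\<in>UNIV. cnj (a w) * (spin (w j) * complex_of_real (cos (2 * \<beta>)) * a w
      + \<i> * spin (w j) * complex_of_real (sin (2 * \<beta>)) * a (w(j := \<not> w j))))"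
    by (simp add: expect_local_op)
  also have "\<dots> = (\<Sum>w\<in>UNIV. (spin (w j) * complex_of_real (cos (2 * \<beta>))
      + \<i> * spin (w j) * complex_of_real (sin (2 * \<beta>))
        * exp (\<i> * \<gamma> * (mis_cost E lam w - mis_cost E lam (w(j := \<not> w j))))) / 2 ^ CARD('n))"
    by (intro sum.cong refl) (simp add: distrib_left mult.left_commute[of "cnj _"] amplitudes add_divide_distrib)
  finally show ?thesis
    by (simp add: mis_cost_flip[OF assms] sum_divide_distrib mult_ac)
qed

lemma exp_double_add_one_half: "(exp (2 * \<i> * z) + 1) / 2 = exp (\<i> * z) * cos z"
proof -
  have double: "exp (\<i> * z) * exp (\<i> * z) = exp (2 * \<i> * z)"
    unfolding exp_add[symmetric] by (rule arg_cong[where f = exp]) simp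
  have inverse: "exp (\<i> * z) * exp (- (\<i> * z)) = 1"
    by (simp add: exp_minus)
  have "exp (\<i> * z) * cos z = (exp (\<i> * z) * exp (\<i> * z) + exp (\<i> * z) * exp (- (\<i> * z))) / 2"
    by (simp add: cos_exp_eq distrib_left)
  then show ?thesis
    unfolding double inverse by (rule sym)
qed

lemma sum_spin_qaoa_phases:
  fixes \<beta> \<gamma> lam :: real and d :: nat
  shows "(\<Sum>b\<in>UNIV. spin b * complex_of_real (cos (2 * \<beta>))
        + \<i> * spin b * complex_of_real (sin (2 * \<beta>)) * exp (- (2 * \<i> * \<gamma>) * spin b)
        * ((exp (2 * (2 * \<i> * \<gamma>) * lam * spin b) + 1) / 2) ^ d) / 2
    = complex_of_real (sin (2 * \<beta>) * cos (2 * \<gamma> * lam) ^ d * sin (2 * \<gamma> * (1 - real d * lam)))"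
proof -
  define \<theta> where "\<theta> = 2 * \<gamma> * (1 - real d * lam)"
  have half_angle: "(exp (2 * (2 * \<i> * \<gamma>) * lam * spin b) + 1) / 2
      = exp (2 * \<i> * \<gamma> * lam * spin b) * complex_of_real (cos (2 * \<gamma> * lam))" for b
    using exp_double_add_one_half[of "complex_of_real (2 * \<gamma> * lam * (if b then 1 else -1))"]
      cos_of_real[of "2 * \<gamma> * lam"]
    by (cases b) (simp_all add: spin_def mult_ac)
  have phase: "exp (- (2 * \<i> * \<gamma>) * spin b) * exp (2 * \<i> * \<gamma> * lam * spin b) ^ d
      = exp (- \<i> * \<theta> * spin b)" for b
    unfolding exp_of_nat_mult[symmetric] exp_add[symmetric] \<theta>_def
    by (rule arg_cong[where f = exp]) (simp add: algebra_simps)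
  have sine: "exp (- \<i> * \<theta>) - exp (\<i> * \<theta>) = - 2 * \<i> * complex_of_real (sin \<theta>)"
    by (simp add: sin_exp_eq sin_of_real[symmetric] field_simps)
  have summand: "\<i> * spin b * complex_of_real (sin (2 * \<beta>)) * exp (- (2 * \<i> * \<gamma>) * spin b)
      * ((exp (2 * (2 * \<i> * \<gamma>) * lam * spin b) + 1) / 2) ^ d
    = \<i> * spin b * complex_of_real (sin (2 * \<beta>)) * complex_of_real (cos (2 * \<gamma> * lam)) ^ d
      * exp (- \<i> * \<theta> * spin b)" for b
    unfolding half_angle phase[symmetric] by (simp add: power_mult_distrib mult_ac)
  have "(\<Sum>b\<in>UNIV. spin b * complex_of_real (cos (2 * \<beta>))
        + \<i> * spin b * complex_of_real (sin (2 * \<beta>)) * exp (- (2 * \<i> * \<gamma>) * spin b)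
        * ((exp (2 * (2 * \<i> * \<gamma>) * lam * spin b) + 1) / 2) ^ d) / 2
      = (\<Sum>b\<in>UNIV. spin b * complex_of_real (cos (2 * \<beta>))
        + \<i> * spin b * complex_of_real (sin (2 * \<beta>)) * complex_of_real (cos (2 * \<gamma> * lam)) ^ d
        * exp (- \<i> * \<theta> * spin b)) / 2"
    unfolding summand ..
  also have "\<dots> = \<i> * complex_of_real (sin (2 * \<beta>)) * complex_of_real (cos (2 * \<gamma> * lam)) ^ d
      * (exp (- \<i> * \<theta>) - exp (\<i> * \<theta>)) / 2"
    by (simp add: UNIV_bool spin_def algebra_simps)
  also have "\<dots> = complex_of_real (sin (2 * \<beta>) * cos (2 * \<gamma> * lam) ^ d * sin \<theta>)"
    unfolding sine by (simp add: algebra_simps)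
  finally show ?thesis
    unfolding \<theta>_def .
qed

theorem mainTheorem1:
  fixes E :: "'n::{finite,linorder} set set" and lam \<beta> \<gamma> :: real and j :: 'n
  assumes "simple_graph E"
  shows "expect (qaoa_state E lam \<beta> \<gamma>) (sigma_z j) =
    complex_of_real (sin (2 * \<beta>) * (cos (2 * \<gamma> * lam)) ^ degree E j
                     * sin (2 * \<gamma> * (1 - real (degree E j) * lam)))"
proof -
  have "j \<notin> neighbours E j"
    by (simp add: neighbours_def)
  from average_neighbour_phase[OF this, where c = "2 * \<i> * \<gamma>" and l = lam
      and A = "\<lambda>b. spin b * complex_of_real (cos (2 * \<beta>))"
      and B = "\<lambda>b. \<i> * spin b * complex_of_real (sin (2 * \<beta>))"]
  show ?thesis
    unfolding expect_qaoa_state_sigma_z[OF assms] card_neighbours[OF assms] sum_spin_qaoa_phases .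
qed

end
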